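(* Let $n \ge 0$ and let $A_n$ be the $n$th Laver table. For $k \ge 1$ let $C_k(A_n)$ be the free $\mathbb{Z}$-module with basis $A_n^k$, let $C_0(A_n) = \mathbb{Z}$ (its basis element $1$ identified with the empty tuple), and for $k \ge 1$ let $\partial^*_k : C_k(A_n) \to C_{k-1}(A_n)$ be the $\mathbb{Z}$-linear map given on basis elements by $$\partial^*_k(x_1, \dots, x_k) = \sum_{i=1}^k (-1)^{i-1} (x_1, \dots, x_{i-1},\ x_i * x_{i+1}, \dots, x_i * x_k),$$ and let $\partial^*_0 = 0$. Then the chain complex $(C_k(A_n), \partial^*_k)_{k \ge 0}$ is acyclic: for every $k \ge 0$ one has $\ker \partial^*_k = \operatorname{im} \partial^*_{k+1}$, i.e.\ all its homology groups are trivial.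
   Context: For $N \ge 1$ there is a unique binary operation $*$ on $\{1, \dots, N\}$ such that, for all $p, q$, one has $p * 1 = p+1$ for $p < N$, $N * 1 = 1$, and $p * (q * 1) = (p * q) * (p * 1)$. For $N = 2^n$ this operation satisfies the left-selfdistributive law $x*(y*z) = (x*y)*(x*z)$; the structure $(\{1, \dots, 2^n\}, * )$ is called the $n$th Laver table and denoted $A_n$. *)

theory Defs
  imports Main
begin

text \<open>Outside the carrier the function is normalised to 0 so that it is unique.\<close>

definition is_laver_op :: "nat \<Rightarrow> (nat \<Rightarrow> nat \<Rightarrow> nat) \<Rightarrow> bool" where
  "is_laver_op N f \<longleftrightarrow>
     (\<forall>p q. (p \<notin> {1..N} \<or> q \<notin> {1..N}) \<longrightarrow> f p q = 0) \<and>
     (\<forall>p\<in>{1..N}. \<forall>q\<in>{1..N}. f p q \<in> {1..N}) \<and>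
     (\<forall>p\<in>{1..N}. p < N \<longrightarrow> f p 1 = p + 1) \<and>
     f N 1 = 1 \<and>
     (\<forall>p\<in>{1..N}. \<forall>q\<in>{1..N}. f p (f q 1) = f (f p q) (f p 1))"

definition laver :: "nat \<Rightarrow> nat \<Rightarrow> nat \<Rightarrow> nat" where
  "laver n = (THE f. is_laver_op (2 ^ n) f)"

definition tuples :: "nat \<Rightarrow> nat \<Rightarrow> nat list set" where
  "tuples n k = {xs. length xs = k \<and> set xs \<subseteq> {1..2 ^ n}}"

text \<open>C_k(A_n): integer-valued functions supported on the basis (formal Z-combinations).\<close>
definition chains :: "nat \<Rightarrow> nat \<Rightarrow> (nat list \<Rightarrow> int) set" where
  "chains n k = {c. \<forall>xs. c xs \<noteq> 0 \<longrightarrow> xs \<in> tuples n k}"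

text \<open>The i-th face (0-indexed): (x_1,...,x_i, x_{i+1} * x_{i+2}, ..., x_{i+1} * x_k).\<close>
definition face :: "nat \<Rightarrow> nat \<Rightarrow> nat list \<Rightarrow> nat list" where
  "face n i xs = take i xs @ map (\<lambda>y. laver n (xs ! i) y) (drop (Suc i) xs)"

definition bdry :: "nat \<Rightarrow> nat \<Rightarrow> (nat list \<Rightarrow> int) \<Rightarrow> (nat list \<Rightarrow> int)" where
  "bdry n k c = (\<lambda>ys. \<Sum>xs\<in>tuples n k. \<Sum>i<k.
      (-1) ^ i * c xs * (if face n i xs = ys then 1 else 0))"

end

theory Submission
  imports Defs
begin

text \<open>Prepending the top element 2^n is a contracting homotopy: since 2^n is a left identity of
  A_n, the boundary of (2^n, x) is x minus (2^n, \<partial>x), so every cycle is a boundary. Conversely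
  left distributivity yields the simplicial identities between faces, hence \<partial>\<partial> = 0.

  Both facts presuppose that the operation exists. A table on {1..2N} is built from one on
  {1..N} row by row, downwards from the identity row 2N, keeping reduction modulo N a
  homomorphism; the periodicity of the rows of the smaller table then forces p * 2N = 2N in
  every new row p, which is what the recursion needs to close up.\<close>

lemma laver_op_closed:
  "is_laver_op N f \<Longrightarrow> p \<in> {1..N} \<Longrightarrow> q \<in> {1..N} \<Longrightarrow> f p q \<in> {1..N}"
  unfolding is_laver_op_def by blast

lemma laver_op_1:
  "is_laver_op N f \<Longrightarrow> p \<in> {1..N} \<Longrightarrow> p < N \<Longrightarrow> f p 1 = Suc p"
  unfolding is_laver_op_def by auto

lemma laver_op_top_1: "is_laver_op N f \<Longrightarrow> f N 1 = 1"
  unfolding is_laver_op_def by blast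

lemma laver_op_rec:
  "is_laver_op N f \<Longrightarrow> p \<in> {1..N} \<Longrightarrow> q \<in> {1..N} \<Longrightarrow> f p (f q 1) = f (f p q) (f p 1)"
  unfolding is_laver_op_def by blast

lemma laver_op_Suc:
  assumes f: "is_laver_op N f" and p: "p \<in> {1..N}" and q: "q \<in> {1..N}" "q < N"
  shows "f p (Suc q) = f (f p q) (f p 1)"
  using laver_op_rec[OF f p q(1)] laver_op_1[OF f q] by simp

lemma laver_op_top_left:
  assumes f: "is_laver_op N f"
  shows "q \<in> {1..N} \<Longrightarrow> f N q = q"
proof (induction q)
  case (Suc q)
  show ?case
  proof (cases "q = 0")
    case True
    then show ?thesis using laver_op_top_1[OF f] by simp
  next
    case False
    then have q: "q \<in> {1..N}" "q < N" using Suc.prems by auto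
    then show ?thesis
      using laver_op_Suc[OF f _ q] laver_op_top_1[OF f] laver_op_1[OF f q] Suc.IH by simp
  qed
qed simp

lemma laver_op_less:
  assumes f: "is_laver_op N f"
  shows "p \<in> {1..N} \<Longrightarrow> p < N \<Longrightarrow> q \<in> {1..N} \<Longrightarrow> p < f p q"
proof (induction "N - p" arbitrary: p q rule: less_induct)
  case less
  note p = less.prems(1,2)
  show ?case using less.prems(3)
  proof (induction q)
    case (Suc q)
    show ?case
    proof (cases "q = 0")
      case True
      then show ?thesis using laver_op_1[OF f p] by simp
    next
      case False
      then have q: "q \<in> {1..N}" "q < N" using Suc.prems by auto
      have rec: "f p (Suc q) = f (f p q) (Suc p)"
        using laver_op_Suc[OF f p(1) q] laver_op_1[OF f p] by simp
      have "p < f p q" "f p q \<in> {1..N}"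
        using Suc.IH q laver_op_closed[OF f p(1) q(1)] by auto
      moreover have "f p q < f (f p q) (Suc p)" if "f p q < N"
        using less.hyps[of "f p q" "Suc p"] that calculation p by auto
      ultimately show ?thesis
        using rec laver_op_top_left[OF f, of "Suc p"] p by (cases "f p q = N") auto
    qed
  qed simp
qed

lemma laver_op_right_top:
  assumes f: "is_laver_op N f" and p: "p \<in> {1..N}"
  shows "f p N = N"
proof (rule ccontr)
  assume ne: "f p N \<noteq> N"
  then have pN: "p < N"
    using laver_op_top_left[OF f, of N] p by (cases "p = N") auto
  have N: "N \<in> {1..N}" using p by auto
  have r: "f p N \<in> {1..N}" "p < f p N"
    using laver_op_closed[OF f p N] laver_op_less[OF f p pN N] by auto
  \<comment> \<open>at q = N the relation reads p + 1 = (p * N) * (p + 1), but (p * N) * x > p * N > p\<close>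
  have "Suc p = f (f p N) (Suc p)"
    using laver_op_rec[OF f p N] laver_op_top_1[OF f] laver_op_1[OF f p pN] by simp
  moreover have "f p N < f (f p N) (Suc p)"
    using laver_op_less[OF f r(1), of "Suc p"] ne r pN by auto
  ultimately show False using r by simp
qed

lemma laver_op_left_distrib_row:
  assumes f: "is_laver_op N f" and p: "p \<in> {1..N}" "p < N"
    and lower: "\<And>p' q r. p < p' \<Longrightarrow> p' \<in> {1..N} \<Longrightarrow> q \<in> {1..N} \<Longrightarrow> r \<in> {1..N} \<Longrightarrow>
      f p' (f q r) = f (f p' q) (f p' r)"
  shows "q \<in> {1..N} \<Longrightarrow> r \<in> {1..N} \<Longrightarrow> f p (f q r) = f (f p q) (f p r)"
proof (induction "N - q" arbitrary: q r rule: less_induct)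
  case less
  note q = less.prems(1)
  show ?case
  proof (cases "q = N")
    case True
    then show ?thesis
      using laver_op_top_left[OF f] laver_op_closed[OF f] laver_op_right_top[OF f p(1)] less.prems p
      by simp
  next
    case False
    then have qN: "q < N" using q by auto
    show ?thesis using less.prems(2)
    proof (induction r)
      case (Suc r)
      show ?case
      proof (cases "r = 0")
        case True
        then show ?thesis using laver_op_rec[OF f p(1) q] by simp
      next
        case False
        then have r: "r \<in> {1..N}" "r < N" using Suc.prems by auto
        have q1: "f q 1 \<in> {1..N}" "q < f q 1" using laver_op_1[OF f q qN] qN by auto
        have qr: "f q r \<in> {1..N}" "q < f q r"
          using laver_op_closed[OF f q r(1)] laver_op_less[OF f q qN r(1)] by auto
        have pq: "f p q \<in> {1..N}" "p < f p q"
          using laver_op_closed[OF f p(1) q] laver_op_less[OF f p q] by auto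
        have pr: "f p r \<in> {1..N}" using laver_op_closed[OF f p(1) r(1)] .
        have p1: "f p 1 \<in> {1..N}" using laver_op_1[OF f p] p by auto
        have "f p (f q (Suc r)) = f p (f (f q r) (f q 1))"
          using laver_op_Suc[OF f q r] by simp
        also have "\<dots> = f (f p (f q r)) (f p (f q 1))"
          using less.hyps[of "f q r" "f q 1"] qr q1 qN by auto
        also have "\<dots> = f (f (f p q) (f p r)) (f (f p q) (f p 1))"
          using Suc.IH r laver_op_rec[OF f p(1) q] by simp
        also have "\<dots> = f (f p q) (f (f p r) (f p 1))"
          using lower[of "f p q" "f p r" "f p 1"] pq pr p1 by auto
        also have "\<dots> = f (f p q) (f p (Suc r))"
          using laver_op_Suc[OF f p(1) r] by simp
        finally show ?thesis .
      qed
    qed simp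
  qed
qed

lemma laver_op_left_distrib:
  assumes f: "is_laver_op N f"
  shows "p \<in> {1..N} \<Longrightarrow> q \<in> {1..N} \<Longrightarrow> r \<in> {1..N} \<Longrightarrow> f p (f q r) = f (f p q) (f p r)"
proof (induction "N - p" arbitrary: p q r rule: less_induct)
  case less
  show ?case
  proof (cases "p = N")
    case True
    then show ?thesis using laver_op_top_left[OF f] laver_op_closed[OF f] less.prems by simp
  next
    case False
    then have "p < N" using less.prems by auto
    with less show ?thesis
      using laver_op_left_distrib_row[OF f less.prems(1)] by (metis diff_less_mono2)
  qed
qed

lemma laver_op_eq_on_carrier:
  assumes f: "is_laver_op N f" and g: "is_laver_op N g"
  shows "p \<in> {1..N} \<Longrightarrow> q \<in> {1..N} \<Longrightarrow> f p q = g p q"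
proof (induction "N - p" arbitrary: p q rule: less_induct)
  case less
  note p = less.prems(1)
  show ?case
  proof (cases "p = N")
    case True
    then show ?thesis using laver_op_top_left[OF f] laver_op_top_left[OF g] less.prems by simp
  next
    case False
    then have pN: "p < N" using p by auto
    show ?thesis using less.prems(2)
    proof (induction q)
      case (Suc q)
      show ?case
      proof (cases "q = 0")
        case True
        then show ?thesis using laver_op_1[OF f p pN] laver_op_1[OF g p pN] by simp
      next
        case False
        then have q: "q \<in> {1..N}" "q < N" using Suc.prems by auto
        have "f p (Suc q) = f (g p q) (Suc p)"
          using laver_op_Suc[OF f p q] Suc.IH q laver_op_1[OF f p pN] by simp
        also have "\<dots> = g (g p q) (Suc p)"
          using less.hyps[of "g p q" "Suc p"] laver_op_less[OF g p pN q(1)]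
            laver_op_closed[OF g p q(1)] pN by auto
        also have "\<dots> = g p (Suc q)"
          using laver_op_Suc[OF g p q] laver_op_1[OF g p pN] by simp
        finally show ?thesis .
      qed
    qed simp
  qed
qed

lemma laver_op_unique:
  assumes f: "is_laver_op N f" and g: "is_laver_op N g"
  shows "f = g"
proof (intro ext)
  fix p q
  show "f p q = g p q"
  proof (cases "p \<in> {1..N} \<and> q \<in> {1..N}")
    case True
    then show ?thesis using laver_op_eq_on_carrier[OF f g] by blast
  next
    case False
    then show ?thesis using f g unfolding is_laver_op_def by auto
  qed
qed

lemma laver_op_shift:
  assumes f: "is_laver_op N f" and p: "p \<in> {1..N}" and P: "1 \<le> P" "f p P = N"
  shows "1 \<le> q \<Longrightarrow> q + P \<le> N \<Longrightarrow> f p (q + P) = f p q"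
proof (induction q)
  case (Suc q)
  show ?case
  proof (cases "q = 0")
    case True
    then have "P \<in> {1..N}" "P < N" using Suc.prems P by auto
    then show ?thesis
      using True laver_op_Suc[OF f p] P(2) laver_op_top_left[OF f laver_op_closed[OF f p, of 1]] p
      by simp
  next
    case False
    then have "q + P \<in> {1..N}" "q + P < N" "q \<in> {1..N}" "q < N" using Suc.prems by auto
    then show ?thesis using laver_op_Suc[OF f p] Suc.IH False by simp
  qed
qed simp

lemma laver_op_mod:
  assumes f: "is_laver_op N f" and p: "p \<in> {1..N}" and P: "1 \<le> P" "f p P = N"
  shows "q \<in> {1..N} \<Longrightarrow> f p q = f p ((q - 1) mod P + 1)"
proof (induction q rule: less_induct)
  case (less q)
  show ?case
  proof (cases "q \<le> P")
    case True
    then show ?thesis using less.prems by (subst mod_less) auto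
  next
    case False
    then have q': "q - P \<in> {1..N}" "q - P < q" using less.prems P by auto
    have "f p q = f p ((q - P) + P)" using False by simp
    also have "\<dots> = f p (q - P)" using laver_op_shift[OF f p P, of "q - P"] False less.prems by simp
    also have "\<dots> = f p ((q - P - 1) mod P + 1)" using less.IH[OF q'(2,1)] .
    also have "(q - P - 1) mod P = (q - 1) mod P"
      using False mod_add_self2[of "q - P - 1" P] by simp
    finally show ?thesis .
  qed
qed

lemma laver_op_period:
  assumes f: "is_laver_op N f" and p: "p \<in> {1..N}"
  obtains P where "1 \<le> P" "P dvd N" "\<And>q. q \<in> {1..N} \<Longrightarrow> f p q = N \<longleftrightarrow> P dvd q"
proof -
  define P where "P = (LEAST q. 1 \<le> q \<and> f p q = N)"
  have ex: "1 \<le> N \<and> f p N = N" using laver_op_right_top[OF f p] p by auto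
  have P: "1 \<le> P" "f p P = N"
    using LeastI[of "\<lambda>q. 1 \<le> q \<and> f p q = N", OF ex] unfolding P_def by auto
  have below_P: "f p q \<noteq> N" if "1 \<le> q" "q < P" for q
    using that not_less_Least[of q "\<lambda>q. 1 \<le> q \<and> f p q = N"] unfolding P_def by auto
  have hits_N: "f p q = N \<longleftrightarrow> P dvd q" if q: "q \<in> {1..N}" for q
  proof -
    obtain m where m: "q = Suc m" using q by (cases q) auto
    have "m mod P + 1 \<le> P" using P by (simp add: Suc_leI)
    then have "f p (m mod P + 1) = N \<longleftrightarrow> m mod P + 1 = P"
      using below_P[of "m mod P + 1"] P by fastforce
    then have "f p q = N \<longleftrightarrow> m mod P + 1 = P"
      using laver_op_mod[OF f p P q] m by simp
    also have "\<dots> \<longleftrightarrow> P dvd q"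
      using m mod_Suc[of m P] by (auto simp: dvd_eq_mod_eq_0)
    finally show ?thesis .
  qed
  moreover have "P dvd N" using hits_N[of N] ex by simp
  ultimately show ?thesis using that P(1) by blast
qed

definition fold_half :: "nat \<Rightarrow> nat \<Rightarrow> nat" where
  "fold_half N x = (if x \<le> N then x else x - N)"

lemma fold_half_closed: "x \<in> {1..2 * N} \<Longrightarrow> fold_half N x \<in> {1..N}"
  unfolding fold_half_def by auto

lemma fold_half_Suc:
  assumes f: "is_laver_op N f" and q: "q \<in> {1..<2 * N}"
  shows "fold_half N (Suc q) = f (fold_half N q) 1"
proof -
  consider "q < N" | "q = N" | "N < q" by linarith
  then show ?thesis
  proof cases
    case 1
    then show ?thesis using laver_op_1[OF f, of q] q unfolding fold_half_def by auto
  next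
    case 2
    then show ?thesis using laver_op_top_1[OF f] q unfolding fold_half_def by auto
  next
    case 3
    then show ?thesis using laver_op_1[OF f, of "q - N"] q unfolding fold_half_def by auto
  qed
qed

lemma dvd_fold_half_iff:
  assumes "P dvd N" and "q \<in> {1..2 * N}"
  shows "P dvd fold_half N q \<longleftrightarrow> P dvd q"
proof (cases "q \<le> N")
  case False
  then have "q = (q - N) + N" by simp
  then show ?thesis using False assms(1) unfolding fold_half_def by (metis dvd_add_left_iff)
qed (simp add: fold_half_def)

text \<open>Rows a..2N of the table on {1..2N} under construction from f; fold_half is reduction
  modulo N into {1..N}.\<close>

locale lower_rows =
  fixes N :: nat and f :: "nat \<Rightarrow> nat \<Rightarrow> nat" and a :: nat and g :: "nat \<Rightarrow> nat \<Rightarrow> nat"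
  assumes base: "is_laver_op N f" and N_pos: "1 \<le> N"
    and closed: "p \<in> {a..2 * N} \<Longrightarrow> q \<in> {1..2 * N} \<Longrightarrow> g p q \<in> {1..2 * N}"
    and top_row: "q \<in> {1..2 * N} \<Longrightarrow> g (2 * N) q = q"
    and row_1: "p \<in> {a..<2 * N} \<Longrightarrow> g p 1 = Suc p"
    and row_Suc: "p \<in> {a..<2 * N} \<Longrightarrow> q \<in> {1..<2 * N} \<Longrightarrow> g p (Suc q) = g (g p q) (Suc p)"
    and row_top: "p \<in> {a..<2 * N} \<Longrightarrow> g p (2 * N) = 2 * N"
    and increasing: "p \<in> {a..<2 * N} \<Longrightarrow> q \<in> {1..2 * N} \<Longrightarrow> p < g p q"
    and fold_half_hom:
      "p \<in> {a..2 * N} \<Longrightarrow> q \<in> {1..2 * N} \<Longrightarrow> fold_half N (g p q) = f (fold_half N p) (fold_half N q)"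

definition next_row :: "(nat \<Rightarrow> nat \<Rightarrow> nat) \<Rightarrow> nat \<Rightarrow> nat \<Rightarrow> nat" where
  "next_row g a q = ((\<lambda>y. g y (Suc a)) ^^ (q - 1)) (Suc a)"

lemma next_row_1: "next_row g a 1 = Suc a"
  unfolding next_row_def by simp

lemma next_row_Suc: "1 \<le> q \<Longrightarrow> next_row g a (Suc q) = g (next_row g a q) (Suc a)"
  unfolding next_row_def by (cases q) auto

locale row_extension = lower_rows N f "Suc a" g for N f a g +
  assumes a_pos: "1 \<le> a" and a_less: "a < 2 * N"
begin

lemma Suc_a_mem: "Suc a \<in> {1..2 * N}"
  using a_less by auto

lemma next_row_closed: "1 \<le> q \<Longrightarrow> next_row g a q \<in> {Suc a..2 * N}"
proof (induction q)
  case (Suc q)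
  show ?case
  proof (cases "q = 0")
    case True
    then show ?thesis using next_row_1 a_less by simp
  next
    case False
    then have prev: "next_row g a q \<in> {Suc a..2 * N}" using Suc.IH by simp
    have "next_row g a q < g (next_row g a q) (Suc a)" if "next_row g a q \<noteq> 2 * N"
      using increasing[of "next_row g a q" "Suc a"] prev that Suc_a_mem by auto
    then show ?thesis
      using next_row_Suc[of q] False closed[OF prev Suc_a_mem] prev top_row[OF Suc_a_mem]
      by (cases "next_row g a q = 2 * N") auto
  qed
qed simp

lemma fold_half_next_row:
  "q \<in> {1..2 * N} \<Longrightarrow> fold_half N (next_row g a q) = f (fold_half N a) (fold_half N q)"
proof (induction q)
  case (Suc q)
  have a: "fold_half N a \<in> {1..N}" using fold_half_closed a_pos a_less by auto
  have a1: "fold_half N (Suc a) = f (fold_half N a) 1"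
    using fold_half_Suc[OF base, of a] a_pos a_less by auto
  show ?case
  proof (cases "q = 0")
    case True
    moreover have "fold_half N 1 = 1" using N_pos unfolding fold_half_def by simp
    ultimately show ?thesis using next_row_1 a1 by simp
  next
    case False
    then have q: "q \<in> {1..<2 * N}" "q \<in> {1..2 * N}" using Suc.prems by auto
    have "fold_half N (next_row g a (Suc q)) = f (fold_half N (next_row g a q)) (fold_half N (Suc a))"
      using next_row_Suc[of q] False fold_half_hom[OF next_row_closed Suc_a_mem] by simp
    also have "\<dots> = f (f (fold_half N a) (fold_half N q)) (f (fold_half N a) 1)"
      using Suc.IH q a1 by simp
    also have "\<dots> = f (fold_half N a) (f (fold_half N q) 1)"
      using laver_op_rec[OF base a fold_half_closed[OF q(2)]] by simp
    also have "\<dots> = f (fold_half N a) (fold_half N (Suc q))"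
      using fold_half_Suc[OF base q(1)] by simp
    finally show ?thesis .
  qed
qed simp

lemma next_row_periodic:
  assumes top: "next_row g a q = 2 * N" and q: "1 \<le> q"
  shows "1 \<le> j \<Longrightarrow> next_row g a (q + j) = next_row g a j"
proof (induction j)
  case (Suc j)
  show ?case
  proof (cases "j = 0")
    case True
    then show ?thesis using next_row_Suc[OF q] top top_row[OF Suc_a_mem] next_row_1 by simp
  next
    case False
    then show ?thesis using next_row_Suc[of "q + j"] next_row_Suc[of j] Suc q by simp
  qed
qed simp

lemma next_row_multiple:
  assumes top: "next_row g a q = 2 * N" and q: "1 \<le> q"
  shows "1 \<le> m \<Longrightarrow> next_row g a (m * q) = 2 * N"
proof (induction m)
  case (Suc m)
  then show ?case
    using next_row_periodic[OF top q, of "m * q"] q top by (cases "m = 0") (auto simp: add.commute)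
qed simp

lemma next_row_less_Suc:
  "1 \<le> q \<Longrightarrow> next_row g a q < 2 * N \<Longrightarrow> next_row g a q < next_row g a (Suc q)"
  using next_row_Suc[of q] increasing[of "next_row g a q" "Suc a"] next_row_closed[of q] Suc_a_mem
  by auto

text \<open>The values N and 2N of the new row are the preimages of N under folding, so the period of
  row (a mod N) of f governs where they occur.\<close>

lemma next_row_period:
  obtains P where "1 \<le> P" "P dvd N"
    "\<And>q. q \<in> {1..2 * N} \<Longrightarrow> next_row g a q \<in> {N, 2 * N} \<longleftrightarrow> P dvd q"
proof -
  have a: "fold_half N a \<in> {1..N}" using fold_half_closed a_pos a_less by auto
  obtain P where P: "1 \<le> P" "P dvd N" "\<And>q. q \<in> {1..N} \<Longrightarrow> f (fold_half N a) q = N \<longleftrightarrow> P dvd q"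
    using laver_op_period[OF base a] by blast
  have "next_row g a q \<in> {N, 2 * N} \<longleftrightarrow> P dvd q" if q: "q \<in> {1..2 * N}" for q
  proof -
    have "next_row g a q \<in> {N, 2 * N} \<longleftrightarrow> fold_half N (next_row g a q) = N"
      using next_row_closed[of q] q unfolding fold_half_def by auto
    also have "\<dots> \<longleftrightarrow> P dvd fold_half N q"
      using fold_half_next_row[OF q] P(3)[OF fold_half_closed[OF q]] by simp
    also have "\<dots> \<longleftrightarrow> P dvd q" using dvd_fold_half_iff[OF P(2) q] .
    finally show ?thesis .
  qed
  then show ?thesis using that P(1,2) by blast
qed

text \<open>If the new row takes the value N at the period P, it must climb strictly until the next
  multiple of P, where it can only take the value 2N.\<close>

lemma next_row_double_period:
  assumes P: "1 \<le> P" "P dvd N" "\<And>q. q \<in> {1..2 * N} \<Longrightarrow> next_row g a q \<in> {N, 2 * N} \<longleftrightarrow> P dvd q"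
    and half: "next_row g a P = N"
  shows "next_row g a (2 * P) = 2 * N"
proof -
  have PN: "P \<le> N" using P N_pos by (simp add: dvd_imp_le)
  have "N < next_row g a (P + i)" if "i \<in> {1..P}" for i
    using that
  proof (induction i)
    case (Suc i)
    show ?case
    proof (cases "i = 0")
      case True
      then show ?thesis using next_row_less_Suc[of P] half P N_pos by simp
    next
      case False
      have "\<not> P dvd (P + i)"
        using False Suc.prems by (auto simp: dvd_add_right_iff dest: dvd_imp_le)
      then have "next_row g a (P + i) \<noteq> 2 * N"
        using P(3)[of "P + i"] Suc.prems PN by auto
      then show ?thesis
        using next_row_closed[of "P + i"] next_row_less_Suc[of "P + i"] Suc False P(1) by fastforce
    qed
  qed simp
  then have "N < next_row g a (2 * P)" using P(1) by (simp add: mult_2)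
  moreover have "next_row g a (2 * P) \<in> {N, 2 * N}" using P(3)[of "2 * P"] P(1) PN by auto
  ultimately show ?thesis by auto
qed

lemma next_row_top: "next_row g a (2 * N) = 2 * N"
proof -
  obtain P where P: "1 \<le> P" "P dvd N"
    "\<And>q. q \<in> {1..2 * N} \<Longrightarrow> next_row g a q \<in> {N, 2 * N} \<longleftrightarrow> P dvd q"
    using next_row_period by blast
  obtain k where k: "N = P * k" "1 \<le> k" using P(2) N_pos by (metis dvdE less_one not_le mult_0_right)
  have PN: "P \<le> N" using P N_pos by (simp add: dvd_imp_le)
  have "next_row g a P \<in> {N, 2 * N}" using P(1,3) PN by auto
  then show ?thesis
  proof
    assume "next_row g a P = N"
    then have "next_row g a (2 * P) = 2 * N" using next_row_double_period P by blast
    then have "next_row g a (k * (2 * P)) = 2 * N" using next_row_multiple k(2) P(1) by simp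
    moreover have "k * (2 * P) = 2 * N" using k(1) by simp
    ultimately show ?thesis by simp
  next
    assume "next_row g a P \<in> {2 * N}"
    then have "next_row g a (2 * k * P) = 2 * N" using next_row_multiple k(2) P(1) by simp
    moreover have "2 * k * P = 2 * N" using k(1) by simp
    ultimately show ?thesis by simp
  qed
qed

lemma lower_rows_next: "lower_rows N f a (g(a := next_row g a))"
proof unfold_locales
  fix p q assume p: "p \<in> {a..2 * N}" and q: "q \<in> {1..2 * N}"
  show "(g(a := next_row g a)) p q \<in> {1..2 * N}"
    using next_row_closed[of q] closed[of p q] p q by (cases "p = a") auto
next
  fix q assume "q \<in> {1..2 * N}"
  then show "(g(a := next_row g a)) (2 * N) q = q" using top_row a_less by simp
next
  fix p assume p: "p \<in> {a..<2 * N}"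
  show "(g(a := next_row g a)) p 1 = Suc p" using next_row_1 row_1[of p] p by (cases "p = a") auto
next
  fix p q assume p: "p \<in> {a..<2 * N}" and q: "q \<in> {1..<2 * N}"
  show "(g(a := next_row g a)) p (Suc q) = (g(a := next_row g a)) ((g(a := next_row g a)) p q) (Suc p)"
  proof (cases "p = a")
    case True
    have "next_row g a q \<noteq> a" using next_row_closed[of q] q by auto
    then show ?thesis using True next_row_Suc[of q] q by simp
  next
    case False
    then have p': "p \<in> {Suc a..<2 * N}" using p by auto
    have "g p q \<noteq> a" using increasing[OF p'] q p' by fastforce
    then show ?thesis using False row_Suc[OF p' q] by simp
  qed
next
  fix p assume p: "p \<in> {a..<2 * N}"
  show "(g(a := next_row g a)) p (2 * N) = 2 * N" using next_row_top row_top[of p] p by (cases "p = a") auto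
next
  fix p q assume p: "p \<in> {a..<2 * N}" and q: "q \<in> {1..2 * N}"
  show "p < (g(a := next_row g a)) p q" using next_row_closed[of q] increasing[of p q] p q by (cases "p = a") auto
next
  fix p q assume p: "p \<in> {a..2 * N}" and q: "q \<in> {1..2 * N}"
  show "fold_half N ((g(a := next_row g a)) p q) = f (fold_half N p) (fold_half N q)"
    using fold_half_next_row[OF q] fold_half_hom[of p q] p q by (cases "p = a") auto
qed (fact base N_pos)+

end

lemma lower_rows_exist:
  assumes f: "is_laver_op N f" and N: "1 \<le> N"
  shows "1 \<le> a \<Longrightarrow> a \<le> 2 * N \<Longrightarrow> \<exists>g. lower_rows N f a g"
proof (induction "2 * N - a" arbitrary: a rule: less_induct)
  case less
  show ?case
  proof (cases "a = 2 * N")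
    case True
    have "lower_rows N f a (\<lambda>p q. q)"
    proof unfold_locales
      fix p q assume "p \<in> {a..2 * N}" "q \<in> {1..2 * N}"
      then show "fold_half N q = f (fold_half N p) (fold_half N q)"
        using True laver_op_top_left[OF f fold_half_closed] N unfolding fold_half_def by auto
    qed (use True f N in auto)
    then show ?thesis by blast
  next
    case False
    then obtain g where "lower_rows N f (Suc a) g" using less by fastforce
    then have "row_extension N f a g"
      using less.prems False unfolding row_extension_def row_extension_axioms_def by auto
    then show ?thesis using row_extension.lower_rows_next by blast
  qed
qed

lemma laver_op_of_lower_rows:
  assumes "lower_rows N f 1 g"
  shows "is_laver_op (2 * N) (\<lambda>p q. if p \<in> {1..2 * N} \<and> q \<in> {1..2 * N} then g p q else 0)"
    (is "is_laver_op _ ?F")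
proof -
  interpret lower_rows N f 1 g by fact
  have one: "1 \<in> {1..2 * N}" using N_pos by simp
  have g1: "p \<in> {1..2 * N} \<Longrightarrow> g p 1 = (if p = 2 * N then 1 else Suc p)" for p
    using row_1 top_row one by auto
  have "?F p (?F q 1) = ?F (?F p q) (?F p 1)" if p: "p \<in> {1..2 * N}" and q: "q \<in> {1..2 * N}" for p q
  proof (cases "q = 2 * N")
    case True
    then show ?thesis using g1 top_row row_top closed one p by (cases "p = 2 * N") auto
  next
    case False
    then show ?thesis
      using g1 row_Suc[of p q] top_row closed[of p q] p q one by (cases "p = 2 * N") auto
  qed
  then show ?thesis
    unfolding is_laver_op_def using closed g1 top_row one by auto
qed

lemma laver_op_double: "is_laver_op N f \<Longrightarrow> 1 \<le> N \<Longrightarrow> \<exists>f'. is_laver_op (2 * N) f'"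
  using lower_rows_exist[of N f 1] laver_op_of_lower_rows by fastforce

lemma laver_op_exists: "\<exists>f. is_laver_op (2 ^ n) f"
proof (induction n)
  case 0
  have "is_laver_op 1 (\<lambda>p q. if p = 1 \<and> q = 1 then 1 else 0)"
    unfolding is_laver_op_def by auto
  then show ?case by auto
next
  case (Suc n)
  then show ?case using laver_op_double[of "2 ^ n"] by auto
qed

lemma is_laver_op_laver: "is_laver_op (2 ^ n) (laver n)"
  unfolding laver_def using laver_op_exists laver_op_unique by (metis theI)

lemma laver_closed: "p \<in> {1..2 ^ n} \<Longrightarrow> q \<in> {1..2 ^ n} \<Longrightarrow> laver n p q \<in> {1..2 ^ n}"
  using laver_op_closed[OF is_laver_op_laver] .

lemma laver_top_left: "q \<in> {1..2 ^ n} \<Longrightarrow> laver n (2 ^ n) q = q"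
  using laver_op_top_left[OF is_laver_op_laver] .

lemma laver_left_distrib:
  "p \<in> {1..2 ^ n} \<Longrightarrow> q \<in> {1..2 ^ n} \<Longrightarrow> r \<in> {1..2 ^ n} \<Longrightarrow>
    laver n p (laver n q r) = laver n (laver n p q) (laver n p r)"
  using laver_op_left_distrib[OF is_laver_op_laver] .

lemma finite_tuples: "finite (tuples n k)"
  unfolding tuples_def using finite_lists_length_eq[of "{1..(2::nat) ^ n}" k] by (simp add: conj_commute)

lemma Cons_in_tuples: "x # xs \<in> tuples n (Suc k) \<longleftrightarrow> x \<in> {1..2 ^ n} \<and> xs \<in> tuples n k"
  unfolding tuples_def by auto

lemma length_face: "i < length xs \<Longrightarrow> length (face n i xs) = length xs - 1"
  unfolding face_def by simp

lemma nth_face: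
  "i < length xs \<Longrightarrow> m < length xs - 1 \<Longrightarrow>
    face n i xs ! m = (if m < i then xs ! m else laver n (xs ! i) (xs ! Suc m))"
  unfolding face_def by (auto simp: nth_append min_def)

lemma face_Suc_Cons: "face n (Suc i) (x # xs) = x # face n i xs"
  unfolding face_def by simp

lemma face_0_top: "xs \<in> tuples n k \<Longrightarrow> face n 0 (2 ^ n # xs) = xs"
  unfolding face_def tuples_def by (auto intro!: map_idI laver_top_left)

lemma face_in_tuples:
  assumes xs: "xs \<in> tuples n (Suc k)" and i: "i < Suc k"
  shows "face n i xs \<in> tuples n k"
proof -
  have l: "length xs = Suc k" and s: "set xs \<subseteq> {1..2 ^ n}" using xs unfolding tuples_def by auto
  then have el: "m < Suc k \<Longrightarrow> xs ! m \<in> {1..2 ^ n}" for m by (metis nth_mem subsetD)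
  have len: "length (face n i xs) = k" using length_face[of i xs n] l i by simp
  have "face n i xs ! m \<in> {1..2 ^ n}" if "m < k" for m
    using nth_face[of i xs m n] that l i el laver_closed by simp
  then have "set (face n i xs) \<subseteq> {1..2 ^ n}" using len by (auto simp: in_set_conv_nth)
  with len show ?thesis unfolding tuples_def by simp
qed

lemma face_face:
  assumes xs: "xs \<in> tuples n (Suc k)" and ij: "i \<le> j" "j < k"
  shows "face n j (face n i xs) = face n i (face n (Suc j) xs)"
proof (rule nth_equalityI)
  have l: "length xs = Suc k" and s: "set xs \<subseteq> {1..2 ^ n}" using xs unfolding tuples_def by auto
  then have el: "m < Suc k \<Longrightarrow> xs ! m \<in> {1..2 ^ n}" for m by (metis nth_mem subsetD)
  have l1: "length (face n i xs) = k" "length (face n (Suc j) xs) = k" using length_face l ij by auto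
  show "length (face n j (face n i xs)) = length (face n i (face n (Suc j) xs))"
    using length_face l1 ij by simp
  fix m assume "m < length (face n j (face n i xs))"
  then have m: "m < k - 1" using length_face l1 ij by simp
  have fi: "p < k \<Longrightarrow> face n i xs ! p = (if p < i then xs ! p else laver n (xs ! i) (xs ! Suc p))" for p
    using nth_face[of i xs p n] l ij by simp
  have fj: "p < k \<Longrightarrow> face n (Suc j) xs ! p =
      (if p < Suc j then xs ! p else laver n (xs ! Suc j) (xs ! Suc p))" for p
    using nth_face[of "Suc j" xs p n] l ij by simp
  have "face n j (face n i xs) ! m =
      (if m < j then face n i xs ! m else laver n (face n i xs ! j) (face n i xs ! Suc m))"
    using nth_face[of j "face n i xs" m n] l1 m ij by simp
  also have "\<dots> = (if m < i then face n (Suc j) xs ! m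
      else laver n (face n (Suc j) xs ! i) (face n (Suc j) xs ! Suc m))"
    using fi fj m ij laver_left_distrib[OF el el el, of i "Suc j" "Suc (Suc m)"] by auto
  also have "\<dots> = face n i (face n (Suc j) xs) ! m"
    using nth_face[of i "face n (Suc j) xs" m n] l1 m ij by simp
  finally show "face n j (face n i xs) ! m = face n i (face n (Suc j) xs) ! m" .
qed

definition incidence :: "nat \<Rightarrow> nat \<Rightarrow> nat list \<Rightarrow> nat list \<Rightarrow> int" where
  "incidence n k xs ys = (\<Sum>i<k. (-1) ^ i * (if face n i xs = ys then 1 else 0))"

lemma bdry_eq_sum_incidence: "bdry n k c ys = (\<Sum>xs\<in>tuples n k. c xs * incidence n k xs ys)"
  unfolding bdry_def incidence_def by (simp add: sum_distrib_left mult.assoc mult.left_commute)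

lemma bdry_in_chains: "bdry n (Suc k) c \<in> chains n k"
proof -
  have "bdry n (Suc k) c ys = 0" if "ys \<notin> tuples n k" for ys
    unfolding bdry_def using that face_in_tuples by (intro sum.neutral ballI) fastforce
  then show ?thesis unfolding chains_def by blast
qed

lemma sum_cancel_pairs:
  fixes F :: "nat \<Rightarrow> nat \<Rightarrow> 'a::ab_group_add"
  assumes "\<And>i j. i \<le> j \<Longrightarrow> j < k \<Longrightarrow> F i j = - F (Suc j) i"
  shows "(\<Sum>i<Suc k. \<Sum>j<k. F i j) = 0"
  using assms
proof (induction k)
  case (Suc k)
  have "(\<Sum>i<Suc (Suc k). \<Sum>j<Suc k. F i j)
      = (\<Sum>i<Suc k. \<Sum>j<k. F i j) + (\<Sum>i<Suc k. F i k) + (\<Sum>j<Suc k. F (Suc k) j)"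
    by (simp add: sum.distrib)
  also have "(\<Sum>j<Suc k. F (Suc k) j) = - (\<Sum>i<Suc k. F i k)"
    using Suc.prems by (simp add: sum_negf[symmetric] less_Suc_eq_le)
  moreover have "(\<Sum>i<Suc k. \<Sum>j<k. F i j) = 0" using Suc by simp
  ultimately show ?case by simp
qed simp

lemma bdry_bdry: "bdry n k (bdry n (Suc k) c) = (\<lambda>_. 0)"
proof
  fix ys
  have cancel: "(\<Sum>zs\<in>tuples n k. incidence n (Suc k) xs zs * incidence n k zs ys) = 0"
    if xs: "xs \<in> tuples n (Suc k)" for xs
  proof -
    have "(\<Sum>zs\<in>tuples n k. incidence n (Suc k) xs zs * incidence n k zs ys)
        = (\<Sum>i<Suc k. (-1) ^ i * (\<Sum>zs\<in>tuples n k. if face n i xs = zs then incidence n k zs ys else 0))"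
      unfolding incidence_def[of n "Suc k"] sum_distrib_right sum_distrib_left
      by (subst sum.swap) (auto simp del: sum.lessThan_Suc intro!: sum.cong)
    also have "\<dots> = (\<Sum>i<Suc k. (-1) ^ i * incidence n k (face n i xs) ys)"
      using finite_tuples face_in_tuples[OF xs] by (simp add: sum.delta' del: sum.lessThan_Suc)
    also have "\<dots> = (\<Sum>i<Suc k. \<Sum>j<k. (-1) ^ i * ((-1) ^ j * (if face n j (face n i xs) = ys then 1 else 0)))"
      unfolding incidence_def by (simp add: sum_distrib_left del: sum.lessThan_Suc)
    also have "\<dots> = 0"
      by (rule sum_cancel_pairs) (simp add: face_face[OF xs])
    finally show ?thesis .
  qed
  have "bdry n k (bdry n (Suc k) c) ys
      = (\<Sum>xs\<in>tuples n (Suc k). c xs * (\<Sum>zs\<in>tuples n k. incidence n (Suc k) xs zs * incidence n k zs ys))"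
    unfolding bdry_eq_sum_incidence sum_distrib_right sum_distrib_left mult.assoc
    by (rule sum.swap)
  also have "\<dots> = 0" using cancel by simp
  finally show "bdry n k (bdry n (Suc k) c) ys = 0" .
qed

definition cone :: "nat \<Rightarrow> (nat list \<Rightarrow> int) \<Rightarrow> nat list \<Rightarrow> int" where
  "cone n c ys = (case ys of x # xs \<Rightarrow> if x = 2 ^ n then c xs else 0 | [] \<Rightarrow> 0)"

lemma cone_zero: "cone n (\<lambda>_. 0) = (\<lambda>_. 0)"
  unfolding cone_def by (auto split: list.splits)

lemma cone_in_chains: "c \<in> chains n k \<Longrightarrow> cone n c \<in> chains n (Suc k)"
  unfolding chains_def cone_def by (auto split: list.splits simp: Cons_in_tuples)

lemma incidence_top_Cons:
  assumes "xs \<in> tuples n k"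
  shows "incidence n (Suc k) (2 ^ n # xs) ys = (if xs = ys then 1 else 0)
    - (\<Sum>i<k. (-1) ^ i * (if 2 ^ n # face n i xs = ys then 1 else 0))"
  unfolding incidence_def
  by (subst sum.lessThan_Suc_shift) (simp add: face_0_top[OF assms] face_Suc_Cons sum_negf)

lemma bdry_cone_eq_sum:
  assumes c: "c \<in> chains n k"
  shows "bdry n (Suc k) (cone n c) ys = (\<Sum>xs\<in>tuples n k. c xs * incidence n (Suc k) (2 ^ n # xs) ys)"
proof -
  have "bdry n (Suc k) (cone n c) ys = (\<Sum>xs\<in>Cons (2 ^ n) ` tuples n k. cone n c xs * incidence n (Suc k) xs ys)"
    unfolding bdry_eq_sum_incidence
  proof (rule sum.mono_neutral_right[OF finite_tuples])
    show "Cons (2 ^ n) ` tuples n k \<subseteq> tuples n (Suc k)" by (auto simp: Cons_in_tuples)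
    show "\<forall>xs\<in>tuples n (Suc k) - Cons (2 ^ n) ` tuples n k. cone n c xs * incidence n (Suc k) xs ys = 0"
      using c unfolding chains_def cone_def by (auto split: list.splits)
  qed
  also have "\<dots> = (\<Sum>xs\<in>tuples n k. c xs * incidence n (Suc k) (2 ^ n # xs) ys)"
    by (subst sum.reindex) (auto simp: cone_def inj_on_def)
  finally show ?thesis .
qed

lemma bdry_cone:
  assumes c: "c \<in> chains n k"
  shows "bdry n (Suc k) (cone n c) = c - cone n (bdry n k c)"
proof
  fix ys
  have "(\<Sum>xs\<in>tuples n k. c xs * (if xs = ys then 1 else 0)) = c ys"
    using c finite_tuples unfolding chains_def by (auto simp: if_distrib sum.delta' cong: if_cong)
  moreover have "(\<Sum>xs\<in>tuples n k. c xs * (\<Sum>i<k. (-1) ^ i * (if 2 ^ n # face n i xs = ys then 1 else 0)))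
      = cone n (bdry n k c) ys"
    unfolding cone_def bdry_eq_sum_incidence incidence_def by (auto split: list.splits)
  ultimately show "bdry n (Suc k) (cone n c) ys = (c - cone n (bdry n k c)) ys"
    by (simp add: bdry_cone_eq_sum[OF c] incidence_top_Cons right_diff_distrib sum_subtractf)
qed

theorem proposition1p12:
  fixes n k :: nat
  shows "{c \<in> chains n k. bdry n k c = (\<lambda>_. 0)} = bdry n (Suc k) ` chains n (Suc k)"
proof (intro equalityI subsetI)
  fix c assume "c \<in> {c \<in> chains n k. bdry n k c = (\<lambda>_. 0)}"
  then have c: "c \<in> chains n k" and cycle: "bdry n k c = (\<lambda>_. 0)" by auto
  have "bdry n (Suc k) (cone n c) = c"
    using bdry_cone[OF c] cycle by (simp add: cone_zero fun_diff_def)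
  then show "c \<in> bdry n (Suc k) ` chains n (Suc k)" using cone_in_chains[OF c] by (metis image_eqI)
next
  fix c assume "c \<in> bdry n (Suc k) ` chains n (Suc k)"
  then show "c \<in> {c \<in> chains n k. bdry n k c = (\<lambda>_. 0)}" using bdry_in_chains bdry_bdry by auto
qed

end
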